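(* Let $\mathcal{D}$ be a $\{K_3,K_4\}$-decomposition of $K_{18}$ with $\alpha=13$, let $W$ be the set of vertices $x$ with $\alpha_x\ge 2$, and for $i\in\{0,1,2,3\}$ let $t_i$ be the number of copies of $K_3$ in $\mathcal{D}$ having exactly $i$ vertices in $W$. Then $(t_0,t_1,t_2,t_3)\neq(0,2,7,4)$.
   Context: A $\{K_3,K_4\}$-decomposition of $K_v$ is a collection of subgraphs, each isomorphic to $K_3$ or $K_4$, such that every edge of $K_v$ lies in exactly one of them. $\alpha$ is the number of copies of $K_3$ in the decomposition, and for a vertex $x$, $\alpha_x$ is the number of copies of $K_3$ in the decomposition containing $x$. *)

theory Defs
  imports Main
begin

text \<open>A K_3/K_4-decomposition of the complete graph on vertex set V: a set D of
  subgraphs, each a complete graph on a 3- or 4-subset of V (identified with its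
  vertex set), such that every edge (2-subset) of V lies in exactly one member of D.\<close>

definition K34_decomposition :: "'a set \<Rightarrow> 'a set set \<Rightarrow> bool" where
  "K34_decomposition V D \<longleftrightarrow>
     (\<forall>B\<in>D. B \<subseteq> V \<and> (card B = 3 \<or> card B = 4)) \<and>
     (\<forall>x\<in>V. \<forall>y\<in>V. x \<noteq> y \<longrightarrow> (\<exists>!B. B \<in> D \<and> {x, y} \<subseteq> B))"

definition triangles :: "'a set set \<Rightarrow> 'a set set" where
  "triangles D = {B \<in> D. card B = 3}"

definition alpha :: "'a set set \<Rightarrow> nat" where
  "alpha D = card (triangles D)"

definition alpha_at :: "'a set set \<Rightarrow> 'a \<Rightarrow> nat" where
  "alpha_at D x = card {B \<in> triangles D. x \<in> B}"

end

theory Submission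
  imports Defs
begin

(*
  Call the vertices of W heavy, a K_3 light if exactly one of its vertices (its apex) is heavy
  and full if all are, and a K_4 rich if it has two heavy vertices; beta_x counts the K_4
  containing x.  Counting the edges at x gives 2 alpha_x + 3 beta_x = 17, so alpha_x is 1, 4
  or 7.  The profile (0,2,7,4) then forces |W| = 7, alpha = 4 on W and alpha = 1 off W, and
  counting heavy pairs shows that no K_4 has three heavy vertices and exactly two are rich.
  The two non-heavy vertices of a light triangle lie in distinct rich K_4, so no K_4 through
  its apex is rich; the six heavy neighbours of the apex are then covered by its three other
  triangles, which must all be full.  Two light triangles thus give 3 + 3 - 1 = 5 full
  triangles, but t_3 = 4.
*)

definition quadruples :: "'a set set \<Rightarrow> 'a set set" where
  "quadruples D = {B \<in> D. card B = 4}"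

definition beta_at :: "'a set set \<Rightarrow> 'a \<Rightarrow> nat" where
  "beta_at D x = card {B \<in> quadruples D. x \<in> B}"

lemma card_filter_eq_sum:
  assumes "finite F"
  shows "card {B \<in> F. P B} = (\<Sum>B\<in>F. if P B then 1 else 0)"
  using sum.inter_filter[OF assms, of "\<lambda>_. 1::nat" P] by simp

lemma sum_card_containing:
  assumes "finite F" "finite S"
  shows "(\<Sum>x\<in>S. card {B \<in> F. x \<in> B}) = (\<Sum>B\<in>F. card (B \<inter> S))"
proof -
  have "(\<Sum>x\<in>S. card {B \<in> F. x \<in> B}) = (\<Sum>x\<in>S. \<Sum>B\<in>F. if x \<in> B then 1 else 0)"
    using assms(1) by (simp add: card_filter_eq_sum)
  also have "\<dots> = (\<Sum>B\<in>F. \<Sum>x\<in>S. if x \<in> B then 1 else 0)"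
    by (rule sum.swap)
  also have "\<dots> = (\<Sum>B\<in>F. card (B \<inter> S))"
    using card_filter_eq_sum[OF assms(2)] by (simp add: Int_def conj_commute)
  finally show ?thesis .
qed

lemma sum_by_fibres:
  fixes g :: "'a \<Rightarrow> nat"
  assumes "finite F" "g ` F \<subseteq> {..<n}"
  shows "(\<Sum>B\<in>F. f (g B)) = (\<Sum>i<n. f i * card {B \<in> F. g B = i})"
proof -
  have "(\<Sum>B\<in>F. f (g B)) = (\<Sum>i<n. \<Sum>B\<in>{B \<in> F. g B = i}. f (g B))"
    using sum.group[OF assms(1) finite_lessThan assms(2), of "\<lambda>B. f (g B)"] by simp
  also have "\<dots> = (\<Sum>i<n. f i * card {B \<in> F. g B = i})"
    by (intro sum.cong) auto
  finally show ?thesis .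
qed

lemma le_one_plus_choose_two: "(n::nat) \<le> 1 + (n choose 2)"
  by (induction n) (simp_all add: numeral_2_eq_2)

lemma less_one_plus_choose_two: "3 \<le> (n::nat) \<Longrightarrow> n < 1 + (n choose 2)"
  by (induction n rule: dec_induct) (simp_all add: numeral_2_eq_2 numeral_3_eq_3)

lemma eq_one_plus_choose_two_iff: "(n::nat) = 1 + (n choose 2) \<longleftrightarrow> n = 1 \<or> n = 2"
  using less_one_plus_choose_two[of n]
  by (cases "3 \<le> n") (auto simp: numeral_2_eq_2 numeral_3_eq_3 not_le less_Suc_eq)

locale finite_K34_decomposition =
  fixes V :: "'a set" and D :: "'a set set"
  assumes decomposition: "K34_decomposition V D" and finite_V: "finite V"
begin

lemma block_subset: "B \<in> D \<Longrightarrow> B \<subseteq> V"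
  using decomposition by (auto simp: K34_decomposition_def)

lemma block_card: "B \<in> D \<Longrightarrow> card B = 3 \<or> card B = 4"
  using decomposition by (auto simp: K34_decomposition_def)

lemma finite_block: "B \<in> D \<Longrightarrow> finite B"
  using block_subset finite_V finite_subset by blast

lemma finite_blocks: "finite D"
  using finite_subset[of D "Pow V"] block_subset finite_V by blast

lemma finite_triangles: "finite (triangles D)"
  using finite_blocks by (simp add: triangles_def)

lemma finite_quadruples: "finite (quadruples D)"
  using finite_blocks by (simp add: quadruples_def)

lemma blocks_meet_in_at_most_one_point:
  assumes "B \<in> D" "B' \<in> D" "B \<noteq> B'" "x \<in> B" "x \<in> B'" "y \<in> B" "y \<in> B'"
  shows "x = y"
proof (rule ccontr)
  assume "x \<noteq> y"
  moreover have "x \<in> V" "y \<in> V"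
    using assms block_subset by auto
  ultimately have "\<exists>!B. B \<in> D \<and> {x, y} \<subseteq> B"
    using decomposition by (simp add: K34_decomposition_def)
  then show False
    using assms by auto
qed

lemma pair_covered:
  assumes "x \<in> V" "y \<in> V" "x \<noteq> y"
  obtains B where "B \<in> D" "{x, y} \<subseteq> B"
proof -
  have "\<exists>!B. B \<in> D \<and> {x, y} \<subseteq> B"
    using decomposition assms by (simp add: K34_decomposition_def)
  then show thesis
    using that by auto
qed

lemma triangle_iff: "B \<in> triangles D \<longleftrightarrow> B \<in> D \<and> card B = 3"
  by (simp add: triangles_def)

lemma quadruple_iff: "B \<in> quadruples D \<longleftrightarrow> B \<in> D \<and> card B = 4"
  by (simp add: quadruples_def)

lemma sum_blocks_split:
  "(\<Sum>B\<in>{B \<in> D. P B}. f B) = (\<Sum>B\<in>{B \<in> triangles D. P B}. f B) + (\<Sum>B\<in>{B \<in> quadruples D. P B}. f B)"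
proof -
  have "{B \<in> D. P B} = {B \<in> triangles D. P B} \<union> {B \<in> quadruples D. P B}"
    using block_card by (auto simp: triangle_iff quadruple_iff)
  then show ?thesis
    using finite_blocks by (subst sum.union_disjoint[symmetric]) (auto simp: triangle_iff quadruple_iff)
qed

lemma sum_link:
  assumes "x \<in> V" "S \<subseteq> V"
  shows "(\<Sum>B\<in>{B \<in> D. x \<in> B}. card ((B - {x}) \<inter> S)) = card (S - {x})"
proof -
  have "S - {x} = (\<Union>B\<in>{B \<in> D. x \<in> B}. (B - {x}) \<inter> S)"
  proof (intro equalityI subsetI)
    fix y assume "y \<in> S - {x}"
    with assms obtain B where "B \<in> D" "{x, y} \<subseteq> B"
      using pair_covered[of x y] by blast
    with \<open>y \<in> S - {x}\<close> show "y \<in> (\<Union>B\<in>{B \<in> D. x \<in> B}. (B - {x}) \<inter> S)" by blast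
  qed blast
  moreover have "card (\<Union>B\<in>{B \<in> D. x \<in> B}. (B - {x}) \<inter> S)
      = (\<Sum>B\<in>{B \<in> D. x \<in> B}. card ((B - {x}) \<inter> S))"
  proof (rule card_UN_disjoint)
    show "\<forall>B\<in>{B \<in> D. x \<in> B}. \<forall>B'\<in>{B \<in> D. x \<in> B}. B \<noteq> B' \<longrightarrow>
        (B - {x}) \<inter> S \<inter> ((B' - {x}) \<inter> S) = {}"
    proof (intro ballI impI)
      fix B B' assume "B \<in> {B \<in> D. x \<in> B}" "B' \<in> {B \<in> D. x \<in> B}" "B \<noteq> B'"
      then show "(B - {x}) \<inter> S \<inter> ((B' - {x}) \<inter> S) = {}"
        using blocks_meet_in_at_most_one_point[of B B' x] by blast
    qed
  qed (use finite_blocks finite_block in auto)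
  ultimately show ?thesis by simp
qed

lemma sum_choose_two:
  assumes "S \<subseteq> V"
  shows "(\<Sum>B\<in>D. card (B \<inter> S) choose 2) = card S choose 2"
proof -
  have finite_S: "finite S"
    using assms finite_V finite_subset by blast
  have pairs_eq: "{e. e \<subseteq> S \<and> card e = 2} = (\<Union>B\<in>D. {e. e \<subseteq> B \<inter> S \<and> card e = 2})"
  proof (intro equalityI subsetI)
    fix e assume "e \<in> {e. e \<subseteq> S \<and> card e = 2}"
    then obtain x y where "e = {x, y}" "x \<noteq> y" "e \<subseteq> S"
      by (auto simp: card_2_iff)
    with assms obtain B where "B \<in> D" "e \<subseteq> B"
      using pair_covered[of x y] by blast
    with \<open>e \<subseteq> S\<close> \<open>e = {x, y}\<close> \<open>x \<noteq> y\<close>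
    show "e \<in> (\<Union>B\<in>D. {e. e \<subseteq> B \<inter> S \<and> card e = 2})" by auto
  qed blast
  have "card S choose 2 = card {e. e \<subseteq> S \<and> card e = 2}"
    using finite_S by (simp add: n_subsets)
  also have "\<dots> = card (\<Union>B\<in>D. {e. e \<subseteq> B \<inter> S \<and> card e = 2})"
    by (subst pairs_eq) (rule refl)
  also have "\<dots> = (\<Sum>B\<in>D. card {e. e \<subseteq> B \<inter> S \<and> card e = 2})"
  proof (rule card_UN_disjoint)
    show "\<forall>B\<in>D. \<forall>B'\<in>D. B \<noteq> B' \<longrightarrow>
        {e. e \<subseteq> B \<inter> S \<and> card e = 2} \<inter> {e. e \<subseteq> B' \<inter> S \<and> card e = 2} = {}"
      using blocks_meet_in_at_most_one_point by (fastforce simp: card_2_iff)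
  qed (use finite_blocks finite_S in auto)
  also have "\<dots> = (\<Sum>B\<in>D. card (B \<inter> S) choose 2)"
    using finite_S by (intro sum.cong refl n_subsets) simp
  finally show ?thesis ..
qed

lemma degree_eq:
  assumes "x \<in> V"
  shows "2 * alpha_at D x + 3 * beta_at D x = card V - 1"
proof -
  have link: "card ((B - {x}) \<inter> V) = card B - 1" if "B \<in> D" "x \<in> B" for B
    using that block_subset[OF \<open>B \<in> D\<close>] finite_block[OF \<open>B \<in> D\<close>]
    by (simp add: Int_absorb2 Diff_subset[THEN subset_trans] card_Diff_singleton)
  have "card V - 1 = (\<Sum>B\<in>{B \<in> D. x \<in> B}. card ((B - {x}) \<inter> V))"
    using sum_link[OF assms subset_refl] assms finite_V by simp
  also have "\<dots> = (\<Sum>B\<in>{B \<in> triangles D. x \<in> B}. 2) + (\<Sum>B\<in>{B \<in> quadruples D. x \<in> B}. 3)"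
    unfolding sum_blocks_split
    by (intro arg_cong2[where f = "(+)"] sum.cong refl) (simp_all add: link triangle_iff quadruple_iff)
  finally show ?thesis
    by (simp add: alpha_at_def beta_at_def)
qed

lemma block_count: "3 * alpha D + 6 * card (quadruples D) = card V choose 2"
proof -
  have "card V choose 2 = (\<Sum>B\<in>{B \<in> D. True}. card (B \<inter> V) choose 2)"
    using sum_choose_two[OF subset_refl] by simp
  also have "\<dots> = (\<Sum>B\<in>triangles D. 3) + (\<Sum>B\<in>quadruples D. 6)"
    unfolding sum_blocks_split using block_subset
    by (intro arg_cong2[where f = "(+)"] sum.cong) (auto simp: triangle_iff quadruple_iff Int_absorb2 choose_two)
  finally show ?thesis
    by (simp add: alpha_def)
qed

lemma sum_triangles_by_meet:
  "(\<Sum>B\<in>triangles D. f (card (B \<inter> S))) = (\<Sum>i<4. f i * card {B \<in> triangles D. card (B \<inter> S) = i})"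
proof (rule sum_by_fibres[OF finite_triangles])
  have "card (B \<inter> S) < 4" if "B \<in> triangles D" for B
    using that card_mono[OF finite_block[of B] Int_lower1[of B S]] by (simp add: triangle_iff)
  then show "(\<lambda>B. card (B \<inter> S)) ` triangles D \<subseteq> {..<4}"
    by auto
qed

lemma vertex_types:
  assumes "card V = 18" "x \<in> V"
  shows "alpha_at D x = 1 \<and> beta_at D x = 5 \<or> alpha_at D x = 4 \<and> beta_at D x = 3
    \<or> alpha_at D x = 7 \<and> beta_at D x = 1"
  using degree_eq[OF assms(2)] assms(1) by presburger

lemma heavy_vertices:
  assumes "card V = 18" "alpha D = 13" "W = {x \<in> V. 2 \<le> alpha_at D x}"
    and "(\<Sum>T\<in>triangles D. card (T \<inter> W)) = 28"
  shows "card W = 7" "\<forall>x\<in>W. alpha_at D x = 4" "\<forall>x\<in>W. beta_at D x = 3"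
    "\<forall>x\<in>V - W. alpha_at D x = 1 \<and> beta_at D x = 5"
proof -
  have "W \<subseteq> V" "finite W"
    using assms(3) finite_V by auto
  show light: "\<forall>x\<in>V - W. alpha_at D x = 1 \<and> beta_at D x = 5"
    using vertex_types[OF assms(1)] assms(3) by fastforce
  have "(\<Sum>x\<in>V. alpha_at D x) = (\<Sum>T\<in>triangles D. card (T \<inter> V))"
    unfolding alpha_at_def by (rule sum_card_containing[OF finite_triangles finite_V])
  also have "\<dots> = 39"
    using block_subset assms(2) by (simp add: triangle_iff Int_absorb2 alpha_def)
  finally have "(\<Sum>x\<in>V - W. alpha_at D x) + (\<Sum>x\<in>W. alpha_at D x) = 39"
    using sum.subset_diff[OF \<open>W \<subseteq> V\<close> finite_V, of "alpha_at D"] by simp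
  moreover have sum_W: "(\<Sum>x\<in>W. alpha_at D x) = 28"
    unfolding alpha_at_def using sum_card_containing[OF finite_triangles \<open>finite W\<close>] assms(4) by simp
  moreover have "(\<Sum>x\<in>V - W. alpha_at D x) = card (V - W)"
    using light by simp
  ultimately show "card W = 7"
    using card_Diff_subset[OF \<open>finite W\<close> \<open>W \<subseteq> V\<close>] card_mono[OF finite_V \<open>W \<subseteq> V\<close>] assms(1)
    by simp
  have "4 \<le> alpha_at D x" if "x \<in> W" for x
    using vertex_types[OF assms(1), of x] that assms(3) by auto
  moreover have "(\<Sum>x\<in>W. 4) = (\<Sum>x\<in>W. alpha_at D x)"
    using sum_W \<open>card W = 7\<close> by simp
  ultimately show "\<forall>x\<in>W. alpha_at D x = 4"
    using sum_mono_inv[of "\<lambda>_. 4" W "alpha_at D"] \<open>finite W\<close> by fastforce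
  then show "\<forall>x\<in>W. beta_at D x = 3"
    using vertex_types[OF assms(1)] \<open>W \<subseteq> V\<close> by fastforce
qed

lemma quadruples_meeting_heavy:
  assumes "card V = 18" "alpha D = 13" "W \<subseteq> V" "card W = 7" "\<forall>x\<in>W. beta_at D x = 3"
    and "(\<Sum>T\<in>triangles D. card (T \<inter> W) choose 2) = 19"
  shows "\<forall>K\<in>quadruples D. card (K \<inter> W) \<le> 2"
    "card {K \<in> quadruples D. card (K \<inter> W) = 2} = 2"
proof -
  have "finite W"
    using assms(3) finite_V finite_subset by blast
  have "card (quadruples D) = 19"
    using block_count assms(1,2) by (simp add: choose_two)
  have "21 = (\<Sum>B\<in>{B \<in> D. True}. card (B \<inter> W) choose 2)"
    using sum_choose_two[OF assms(3)] assms(4) by (simp add: choose_two)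
  then have sum_choose: "(\<Sum>K\<in>quadruples D. card (K \<inter> W) choose 2) = 2"
    unfolding sum_blocks_split using assms(6) by simp
  have "(\<Sum>K\<in>quadruples D. card (K \<inter> W)) = (\<Sum>x\<in>W. beta_at D x)"
    unfolding beta_at_def by (rule sum_card_containing[OF finite_quadruples \<open>finite W\<close>, symmetric])
  also have "\<dots> = (\<Sum>K\<in>quadruples D. 1 + (card (K \<inter> W) choose 2))"
    using assms(4,5) sum_choose \<open>card (quadruples D) = 19\<close> by (subst sum.distrib) simp
  finally have "card (K \<inter> W) = 1 + (card (K \<inter> W) choose 2)" if "K \<in> quadruples D" for K
    using sum_mono_inv[of "\<lambda>K. card (K \<inter> W)"] le_one_plus_choose_two that finite_quadruples
    by blast
  then have one_or_two: "card (K \<inter> W) = 1 \<or> card (K \<inter> W) = 2" if "K \<in> quadruples D" for K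
    using that eq_one_plus_choose_two_iff by blast
  then show "\<forall>K\<in>quadruples D. card (K \<inter> W) \<le> 2"
    by fastforce
  have "(\<Sum>K\<in>quadruples D. card (K \<inter> W) choose 2)
      = (\<Sum>K\<in>quadruples D. if card (K \<inter> W) = 2 then 1 else 0)"
    by (intro sum.cong refl) (auto dest!: one_or_two)
  then show "card {K \<in> quadruples D. card (K \<inter> W) = 2} = 2"
    using sum_choose finite_quadruples by (simp add: card_filter_eq_sum)
qed

lemma rich_quadruple_at_light_vertex:
  assumes "W \<subseteq> V" "y \<in> V - W" "alpha_at D y = 1" "beta_at D y + 1 < card W"
    and "T \<in> triangles D" "y \<in> T" "card (T \<inter> W) = 1"
  obtains K where "K \<in> quadruples D" "y \<in> K" "2 \<le> card (K \<inter> W)"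
proof -
  obtain B0 where "{B \<in> triangles D. y \<in> B} = {B0}"
    using assms(3) card_1_singletonE unfolding alpha_at_def by blast
  with assms(5,6) have triangle_at_y: "{B \<in> triangles D. y \<in> B} = {T}"
    by auto
  have "card W = (\<Sum>B\<in>{B \<in> D. y \<in> B}. card ((B - {y}) \<inter> W))"
    using sum_link[of y W] assms(1,2) by simp
  also have "\<dots> = 1 + (\<Sum>K\<in>{K \<in> quadruples D. y \<in> K}. card (K \<inter> W))"
    unfolding sum_blocks_split using assms(2,7) triangle_at_y by (simp add: Diff_Int_distrib2)
  finally have "(\<Sum>K\<in>{K \<in> quadruples D. y \<in> K}. 1) < (\<Sum>K\<in>{K \<in> quadruples D. y \<in> K}. card (K \<inter> W))"
    using assms(4) by (simp add: beta_at_def)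
  then have "\<exists>K\<in>{K \<in> quadruples D. y \<in> K}. \<not> card (K \<inter> W) \<le> 1"
    using sum_mono[of "{K \<in> quadruples D. y \<in> K}" "\<lambda>K. card (K \<inter> W)" "\<lambda>_. 1"] by (meson leD)
  then show thesis
    using that by auto
qed

lemma full_triangles_at_apex:
  assumes "W \<subseteq> V" "w \<in> W" "card W + 1 = 2 * alpha_at D w"
    and "\<forall>K\<in>quadruples D. w \<in> K \<longrightarrow> card (K \<inter> W) = 1"
    and "T \<in> triangles D" "w \<in> T" "card (T \<inter> W) = 1"
  shows "\<forall>B\<in>triangles D. w \<in> B \<and> B \<noteq> T \<longrightarrow> card (B \<inter> W) = 3"
proof -
  define A where "A = {B \<in> triangles D. w \<in> B} - {T}"
  have "finite A"
    using finite_triangles by (simp add: A_def)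
  have drop_apex: "card ((B - {w}) \<inter> W) = card (B \<inter> W) - 1" if "w \<in> B" for B
  proof -
    have "(B - {w}) \<inter> W = (B \<inter> W) - {w}"
      by blast
    then show ?thesis
      using that assms(2) by (simp add: card_Diff_singleton)
  qed
  have "card W - 1 = (\<Sum>B\<in>{B \<in> D. w \<in> B}. card ((B - {w}) \<inter> W))"
    using sum_link[of w W] assms(1,2) by auto
  also have "\<dots> = (\<Sum>B\<in>{B \<in> triangles D. w \<in> B}. card (B \<inter> W) - 1)"
    unfolding sum_blocks_split using assms(4) by (simp add: drop_apex)
  also have "\<dots> = (\<Sum>B\<in>A. card (B \<inter> W) - 1)"
    unfolding A_def using assms(5-7) finite_triangles by (subst sum.remove) auto
  finally have "(\<Sum>B\<in>A. card (B \<inter> W) - 1) = (\<Sum>B\<in>A. 2)"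
    using assms(3,5,6) \<open>finite A\<close> by (simp add: A_def alpha_at_def card_Diff_singleton)
  moreover have "card (B \<inter> W) - 1 \<le> 2" if "B \<in> A" for B
    using that finite_block card_mono[of B "B \<inter> W"] by (fastforce simp: A_def triangle_iff)
  ultimately have "card (B \<inter> W) - 1 = 2" if "B \<in> A" for B
    using sum_mono_inv[of "\<lambda>B. card (B \<inter> W) - 1" A] that \<open>finite A\<close> by blast
  then have "card (B \<inter> W) = 3" if "B \<in> A" for B
    using that by fastforce
  then show ?thesis
    unfolding A_def by blast
qed

lemma rich_quadruple_meets_light_triangle:
  assumes "W \<subseteq> V" "card W = 7" "\<forall>y\<in>V - W. alpha_at D y = 1 \<and> beta_at D y = 5"
    and "\<forall>K\<in>quadruples D. card (K \<inter> W) \<le> 2"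
    and "card {K \<in> quadruples D. card (K \<inter> W) = 2} \<le> 2"
    and "T \<in> triangles D" "card (T \<inter> W) = 1"
    and "K \<in> quadruples D" "card (K \<inter> W) = 2"
  shows "K \<inter> (T - W) \<noteq> {}"
proof -
  have "T \<in> D" "card T = 3" "T \<subseteq> V"
    using assms(6) block_subset by (auto simp: triangle_iff)
  have "card (T - W) = 2"
    using card_Int_Diff[of T W] finite_block[OF \<open>T \<in> D\<close>] \<open>card T = 3\<close> assms(7) by simp
  then obtain p q where "T - W = {p, q}" "p \<noteq> q"
    by (auto simp: card_2_iff)
  define J where "J = {K \<in> quadruples D. card (K \<inter> W) = 2}"
  have "\<exists>K\<in>J. y \<in> K" if y: "y \<in> T - W" for y
  proof -
    have "y \<in> V - W"
      using y \<open>T \<subseteq> V\<close> by auto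
    then obtain K where "K \<in> quadruples D" "y \<in> K" "2 \<le> card (K \<inter> W)"
      by (rule rich_quadruple_at_light_vertex[OF assms(1) _ _ _ assms(6)])
        (use y \<open>y \<in> V - W\<close> assms(2,3,7) in auto)
    then show ?thesis
      using assms(4) by (fastforce simp: J_def)
  qed
  moreover have "p \<in> T - W" "q \<in> T - W"
    using \<open>T - W = {p, q}\<close> by auto
  ultimately obtain Kp Kq where "Kp \<in> J" "p \<in> Kp" "Kq \<in> J" "q \<in> Kq"
    by meson
  have "Kp \<noteq> Kq"
  proof
    assume "Kp = Kq"
    moreover have "Kp \<in> D" "Kp \<noteq> T"
      using \<open>Kp \<in> J\<close> \<open>card T = 3\<close> by (auto simp: J_def quadruple_iff)
    ultimately have "p = q"
      using blocks_meet_in_at_most_one_point[of Kp T p q] \<open>T \<in> D\<close>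
        \<open>p \<in> Kp\<close> \<open>q \<in> Kq\<close> \<open>p \<in> T - W\<close> \<open>q \<in> T - W\<close> by blast
    with \<open>p \<noteq> q\<close> show False ..
  qed
  have "finite J"
    using finite_quadruples by (simp add: J_def)
  then have "J = {Kp, Kq}"
    using card_seteq[of J "{Kp, Kq}"] assms(5) \<open>Kp \<noteq> Kq\<close> \<open>Kp \<in> J\<close> \<open>Kq \<in> J\<close>
    by (simp add: J_def)
  moreover have "K \<in> J"
    using assms(8,9) by (simp add: J_def)
  ultimately show ?thesis
    using \<open>p \<in> Kp\<close> \<open>q \<in> Kq\<close> \<open>p \<in> T - W\<close> \<open>q \<in> T - W\<close> by blast
qed

lemma quadruples_at_apex_meet_once:
  assumes "W \<subseteq> V" "card W = 7" "\<forall>y\<in>V - W. alpha_at D y = 1 \<and> beta_at D y = 5"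
    and "\<forall>K\<in>quadruples D. card (K \<inter> W) \<le> 2"
    and "card {K \<in> quadruples D. card (K \<inter> W) = 2} \<le> 2"
    and "T \<in> triangles D" "T \<inter> W = {w}"
  shows "\<forall>K\<in>quadruples D. w \<in> K \<longrightarrow> card (K \<inter> W) = 1"
proof (intro ballI impI)
  fix K assume "K \<in> quadruples D" "w \<in> K"
  then have "K \<in> D" "K \<noteq> T" "finite K" "card (K \<inter> W) \<le> 2"
    using assms(4,6) finite_block by (auto simp: quadruple_iff triangle_iff)
  have "card (K \<inter> W) \<noteq> 2"
  proof
    assume "card (K \<inter> W) = 2"
    then obtain z where "z \<in> K" "z \<in> T - W"
      using rich_quadruple_meets_light_triangle[OF assms(1-6) _ \<open>K \<in> quadruples D\<close>] assms(7) by auto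
    then have "w = z"
      using blocks_meet_in_at_most_one_point[of K T w z] \<open>K \<in> D\<close> \<open>K \<noteq> T\<close> assms(6,7) \<open>w \<in> K\<close>
      by (auto simp: triangle_iff)
    then show False
      using assms(7) \<open>z \<in> T - W\<close> by blast
  qed
  moreover have "card (K \<inter> W) \<noteq> 0"
    using \<open>finite K\<close> \<open>w \<in> K\<close> assms(7) by auto
  ultimately show "card (K \<inter> W) = 1"
    using \<open>card (K \<inter> W) \<le> 2\<close> by linarith
qed

lemma apex_of_light_triangle:
  assumes "W \<subseteq> V" "card W = 7" "\<forall>x\<in>W. alpha_at D x = 4"
    and "\<forall>y\<in>V - W. alpha_at D y = 1 \<and> beta_at D y = 5"
    and "\<forall>K\<in>quadruples D. card (K \<inter> W) \<le> 2"
    and "card {K \<in> quadruples D. card (K \<inter> W) = 2} \<le> 2"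
    and "T \<in> triangles D" "card (T \<inter> W) = 1"
  obtains w where "w \<in> T" "alpha_at D w = 4" "\<forall>B\<in>triangles D. w \<in> B \<and> B \<noteq> T \<longrightarrow> card (B \<inter> W) = 3"
proof -
  obtain w where "T \<inter> W = {w}"
    using assms(8) card_1_singletonE by blast
  then have "w \<in> W" "w \<in> T" "card W + 1 = 2 * alpha_at D w"
    using assms(2,3) by auto
  have "\<forall>B\<in>triangles D. w \<in> B \<and> B \<noteq> T \<longrightarrow> card (B \<inter> W) = 3"
    by (rule full_triangles_at_apex[OF assms(1) \<open>w \<in> W\<close> \<open>card W + 1 = _\<close>
          quadruples_at_apex_meet_once[OF assms(1,2,4-7) \<open>T \<inter> W = {w}\<close>] assms(7) \<open>w \<in> T\<close> assms(8)])
  then show thesis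
    using that \<open>w \<in> W\<close> \<open>w \<in> T\<close> assms(3) by blast
qed

lemma two_apexes_force_five_triangles:
  assumes "T \<in> triangles D" "T' \<in> triangles D" "T \<noteq> T'" "T \<notin> S" "T' \<notin> S" "finite S"
    and "w \<in> T" "alpha_at D w = 4" "\<forall>B\<in>triangles D. w \<in> B \<and> B \<noteq> T \<longrightarrow> B \<in> S"
    and "w' \<in> T'" "alpha_at D w' = 4" "\<forall>B\<in>triangles D. w' \<in> B \<and> B \<noteq> T' \<longrightarrow> B \<in> S"
  shows "5 \<le> card S"
proof -
  define A where "A = {B \<in> triangles D. w \<in> B} - {T}"
  define A' where "A' = {B \<in> triangles D. w' \<in> B} - {T'}"
  have "finite A" "finite A'"
    using finite_triangles by (simp_all add: A_def A'_def)
  have "card A = 3" "card A' = 3"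
    using assms(1,2,7,8,10,11) by (simp_all add: A_def A'_def alpha_at_def card_Diff_singleton)
  have "A \<union> A' \<subseteq> S"
    using assms(9,12) by (auto simp: A_def A'_def)
  have "w \<noteq> w'"
  proof
    assume "w = w'"
    then have "T' \<in> S"
      using assms(2,3,9,10) by blast
    with assms(5) show False ..
  qed
  have "card (A \<inter> A') \<le> Suc 0"
    unfolding card_le_Suc0_iff_eq[OF finite_Int[OF disjI1, OF \<open>finite A\<close>]]
    using blocks_meet_in_at_most_one_point[of _ _ w w'] \<open>w \<noteq> w'\<close>
    by (auto simp: A_def A'_def triangle_iff)
  then have "5 \<le> card (A \<union> A')"
    using card_Un_Int[OF \<open>finite A\<close> \<open>finite A'\<close>] \<open>card A = 3\<close> \<open>card A' = 3\<close> by simp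
  also have "\<dots> \<le> card S"
    using card_mono[OF assms(6) \<open>A \<union> A' \<subseteq> S\<close>] .
  finally show ?thesis .
qed

lemma two_light_triangles_force_five_full_triangles:
  assumes "W \<subseteq> V" "card W = 7" "\<forall>x\<in>W. alpha_at D x = 4"
    and "\<forall>y\<in>V - W. alpha_at D y = 1 \<and> beta_at D y = 5"
    and "\<forall>K\<in>quadruples D. card (K \<inter> W) \<le> 2"
    and "card {K \<in> quadruples D. card (K \<inter> W) = 2} \<le> 2"
    and "T \<in> triangles D" "card (T \<inter> W) = 1" "T' \<in> triangles D" "card (T' \<inter> W) = 1" "T \<noteq> T'"
  shows "5 \<le> card {B \<in> triangles D. card (B \<inter> W) = 3}" (is "5 \<le> card ?S")
proof -
  obtain w where w: "w \<in> T" "alpha_at D w = 4" "\<forall>B\<in>triangles D. w \<in> B \<and> B \<noteq> T \<longrightarrow> card (B \<inter> W) = 3"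
    using apex_of_light_triangle[OF assms(1-8)] by blast
  obtain w' where w': "w' \<in> T'" "alpha_at D w' = 4" "\<forall>B\<in>triangles D. w' \<in> B \<and> B \<noteq> T' \<longrightarrow> card (B \<inter> W) = 3"
    using apex_of_light_triangle[OF assms(1-6,9,10)] by blast
  have S: "T \<notin> ?S" "T' \<notin> ?S" "finite ?S"
    using assms(8,10) finite_triangles by simp_all
  have "\<forall>B\<in>triangles D. w \<in> B \<and> B \<noteq> T \<longrightarrow> B \<in> ?S"
    "\<forall>B\<in>triangles D. w' \<in> B \<and> B \<noteq> T' \<longrightarrow> B \<in> ?S"
    using w(3) w'(3) by blast+
  then show ?thesis
    by (rule two_apexes_force_five_triangles[OF assms(7,9,11) S w(1,2) _ w'(1,2)])
qed

end

theorem mainTheorem15: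
  fixes D :: "nat set set"
  assumes "K34_decomposition {0..<18} D"
    and "alpha D = 13"
  defines "W \<equiv> {x \<in> {0..<18::nat}. alpha_at D x \<ge> 2}"
  defines "t \<equiv> (\<lambda>i::nat. card {B \<in> triangles D. card (B \<inter> W) = i})"
  shows "(t 0, t 1, t 2, t 3) \<noteq> (0, 2, 7, 4)"
proof
  assume profile: "(t 0, t 1, t 2, t 3) = (0, 2, 7, 4)"
  interpret finite_K34_decomposition "{0..<18::nat}" D
    using assms(1) by unfold_locales auto
  have sums: "(\<Sum>B\<in>triangles D. card (B \<inter> W)) = 28" "(\<Sum>B\<in>triangles D. card (B \<inter> W) choose 2) = 19"
    using sum_triangles_by_meet[of "\<lambda>i. i" W] sum_triangles_by_meet[of "\<lambda>i. i choose 2" W] profile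
    by (simp_all add: t_def eval_nat_numeral choose_two)
  have "card {0..<18::nat} = 18" "W \<subseteq> {0..<18}" "W = {x \<in> {0..<18}. 2 \<le> alpha_at D x}"
    by (auto simp: W_def)
  note heavy = heavy_vertices[OF this(1) assms(2) this(3) sums(1)]
  note meeting = quadruples_meeting_heavy[OF \<open>card {0..<18::nat} = 18\<close> assms(2) \<open>W \<subseteq> _\<close> heavy(1,3) sums(2)]
  obtain T T' where "T \<in> triangles D" "card (T \<inter> W) = 1" "T' \<in> triangles D" "card (T' \<inter> W) = 1" "T \<noteq> T'"
    using profile by (auto simp: t_def card_2_iff)
  then have "5 \<le> card {B \<in> triangles D. card (B \<inter> W) = 3}"
    using two_light_triangles_force_five_full_triangles[OF \<open>W \<subseteq> _\<close> heavy(1,2,4) meeting(1)] meeting(2)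
    by simp
  then show False
    using profile by (simp add: t_def)
qed

end
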